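(* Let $1\le k<n$ and let $C_k=[c_{ij}]_{i,j=1}^k$ be the upper-left $k\times k$ submatrix of an incomplete $n\times n$ pairwise comparison matrix. For $i=1,\dots,k$ let $s_i$ be the number of missing entries in the $i$-th row of $C_k$, $s_{\mathrm{MAX}}=\max_i s_i$, $s_{\mathrm{MIN}}=\min_i s_i$. Let $D_k=[d_{ij}]$ with $d_{ij}=c_{ij}$ if $c_{ij}$ is known and $d_{ij}=0$ if $c_{ij}=?$, and let $A_k$ be the $k\times k$ matrix with diagonal entries $1$ and off-diagonal entries $(A_k)_{ij}=-\frac{d_{ij}}{n-s_i-1}$. If $k=1$, or if $1<k<n$ and $$\overline{\mathit{CI}}(C_k)<\frac{n-k-s_{\mathrm{MAX}}+s_{\mathrm{MIN}}}{k-1},$$ then $A_k$ is invertible, so the system $A_kw=b$ has a unique solution for every $b\in\mathbb{R}^k$.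
   Context: An incomplete pairwise comparison matrix has entries either positive reals or unknown ($c_{ij}=c_{ji}=?$), with known entries satisfying $c_{ii}=1$, $c_{ij}=1/c_{ji}$. Harker's consistency index of a $k\times k$ incomplete pairwise comparison matrix $M$ ($k\ge2$) is $\overline{\mathit{CI}}(M)=\frac{\rho(H)-k}{k-1}$, where $\rho$ is the spectral radius and $H=[h_{ij}]$ has $h_{ii}=1+s_i$ ($s_i$ = number of missing entries in row $i$ of $M$), $h_{ij}=0$ if $m_{ij}=?$, and $h_{ij}=m_{ij}$ otherwise. In the arithmetic incomplete HRE method the unknown weights of $a_1,\dots,a_k$ solve $A_kw=b$ with $b_i=\frac{1}{n-s_i-1}\sum_{j=k+1}^n c_{ij}w(a_j)$ (here all comparisons between $a_1,\dots,a_k$ and the reference alternatives are taken to be known, so that $s_i$ counts the missing entries of row $i$). *)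

theory Defs
  imports "Jordan_Normal_Form.Spectral_Radius"
begin

text \<open>An incomplete pairwise comparison matrix of size n is represented as
  c :: nat => nat => real option on indices 0..n-1; None means the entry is missing (?).\<close>

definition incomplete_pcm :: "nat \<Rightarrow> (nat \<Rightarrow> nat \<Rightarrow> real option) \<Rightarrow> bool" where
  "incomplete_pcm n c \<longleftrightarrow>
     (\<forall>i<n. c i i = Some 1) \<and>
     (\<forall>i<n. \<forall>j<n. c i j = None \<longleftrightarrow> c j i = None) \<and>
     (\<forall>i<n. \<forall>j<n. \<forall>x. c i j = Some x \<longrightarrow> x > 0 \<and> c j i = Some (1 / x))"

definition missing_row :: "(nat \<Rightarrow> nat \<Rightarrow> real option) \<Rightarrow> nat \<Rightarrow> nat \<Rightarrow> nat" where
  "missing_row c k i = card {j. j < k \<and> c i j = None}"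

definition known_or_zero :: "(nat \<Rightarrow> nat \<Rightarrow> real option) \<Rightarrow> nat \<Rightarrow> nat \<Rightarrow> real" where
  "known_or_zero c i j = (case c i j of None \<Rightarrow> 0 | Some x \<Rightarrow> x)"

definition harker_matrix :: "(nat \<Rightarrow> nat \<Rightarrow> real option) \<Rightarrow> nat \<Rightarrow> real mat" where
  "harker_matrix c k = mat k k (\<lambda>(i,j). if i = j then 1 + real (missing_row c k i)
                                       else known_or_zero c i j)"

definition harker_CI :: "(nat \<Rightarrow> nat \<Rightarrow> real option) \<Rightarrow> nat \<Rightarrow> real" where
  "harker_CI c k = (spectral_radius (map_mat complex_of_real (harker_matrix c k)) - real k)
                    / (real k - 1)"

definition hre_matrix :: "nat \<Rightarrow> (nat \<Rightarrow> nat \<Rightarrow> real option) \<Rightarrow> nat \<Rightarrow> real mat" where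
  "hre_matrix n c k = mat k k (\<lambda>(i,j). if i = j then 1
       else - known_or_zero c i j / (real n - real (missing_row c k i) - 1))"

end

theory Submission
  imports Defs
begin

text \<open>Let \<open>E\<close> be the diagonal matrix with entries \<open>n - s\<^sub>i - 1\<close>; these are positive because
  \<open>s\<^sub>i \<le> k - 1 < n - 1\<close>. Entrywise \<open>H = n I - E A\<^sub>k\<close>, so a nonzero kernel vector of \<open>A\<^sub>k\<close> is
  an eigenvector of Harker's matrix \<open>H\<close> for the eigenvalue \<open>n\<close>. Then \<open>\<rho>(H) \<ge> n\<close>, i.e.
  \<open>CI(C\<^sub>k) \<ge> (n - k)/(k - 1) \<ge> (n - k - s\<^sub>M\<^sub>A\<^sub>X + s\<^sub>M\<^sub>I\<^sub>N)/(k - 1)\<close>, contradicting the hypothesis.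
  For \<open>k = 1\<close> the matrix \<open>A\<^sub>1\<close> is the identity.\<close>

lemma det_nonzero_imp_inverse_mat:
  fixes A :: "'a :: field mat"
  assumes A: "A \<in> carrier_mat n n" and det: "det A \<noteq> 0"
  obtains B where "B \<in> carrier_mat n n" "A * B = 1\<^sub>m n" "B * A = 1\<^sub>m n"
  using det_non_zero_imp_unit[OF A det, of "()"] A
  unfolding Units_def ring_mat_def by auto

lemma invertible_mat_if_det_nonzero:
  fixes A :: "'a :: field mat"
  assumes A: "A \<in> carrier_mat n n" and det: "det A \<noteq> 0"
  shows "invertible_mat A"
proof -
  obtain B where "B \<in> carrier_mat n n" "A * B = 1\<^sub>m n" "B * A = 1\<^sub>m n"
    using det_nonzero_imp_inverse_mat[OF A det] .
  then show ?thesis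
    using A unfolding invertible_mat_def inverts_mat_def square_mat.simps by auto
qed

lemma ex1_mult_mat_vec_eq_if_det_nonzero:
  fixes A :: "'a :: field mat"
  assumes A: "A \<in> carrier_mat n n" and det: "det A \<noteq> 0" and b: "b \<in> carrier_vec n"
  shows "\<exists>!w. w \<in> carrier_vec n \<and> A *\<^sub>v w = b"
proof -
  obtain B where B: "B \<in> carrier_mat n n" "A * B = 1\<^sub>m n" "B * A = 1\<^sub>m n"
    using det_nonzero_imp_inverse_mat[OF A det] .
  show ?thesis
  proof (rule ex1I[of _ "B *\<^sub>v b"])
    have "A *\<^sub>v (B *\<^sub>v b) = (A * B) *\<^sub>v b"
      by (rule assoc_mult_mat_vec[OF A B(1) b, symmetric])
    then show "B *\<^sub>v b \<in> carrier_vec n \<and> A *\<^sub>v (B *\<^sub>v b) = b"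
      using B b by simp
  next
    fix w assume w: "w \<in> carrier_vec n \<and> A *\<^sub>v w = b"
    have "w = (B * A) *\<^sub>v w" using B w by simp
    also have "\<dots> = B *\<^sub>v (A *\<^sub>v w)" using A B(1) w by (intro assoc_mult_mat_vec) auto
    finally show "w = B *\<^sub>v b" using w by simp
  qed
qed

lemma eigenvalue_le_spectral_radius_of_real:
  fixes M :: "real mat"
  assumes M: "M \<in> carrier_mat n n" and ev: "eigenvalue M x"
  shows "\<bar>x\<bar> \<le> spectral_radius (map_mat complex_of_real M)"
proof -
  have M': "map_mat complex_of_real M \<in> carrier_mat n n" using M by simp
  have "eigenvalue (map_mat complex_of_real M) (complex_of_real x)"
    by (rule of_real_hom.eigenvalue_hom[OF M ev])
  then have "norm (complex_of_real x) \<in> norm ` spectrum (map_mat complex_of_real M)"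
    unfolding spectrum_def by blast
  then show ?thesis
    using spectral_radius_mem_max(2)[OF M' eigenvalue_imp_nonzero_dim[OF M ev]] by simp
qed

lemma missing_row_le:
  assumes "c i i \<noteq> None" and "i < k"
  shows "missing_row c k i \<le> k - 1"
proof -
  have "{j. j < k \<and> c i j = None} \<subseteq> {..<k} - {i}"
    using assms(1) by auto
  then have "missing_row c k i \<le> card ({..<k} - {i})"
    unfolding missing_row_def by (intro card_mono) auto
  then show ?thesis using assms(2) by simp
qed

lemma harker_matrix_carrier: "harker_matrix c k \<in> carrier_mat k k"
  by (simp add: harker_matrix_def)

lemma hre_matrix_carrier: "hre_matrix n c k \<in> carrier_mat k k"
  by (simp add: hre_matrix_def)

lemma hre_matrix_one: "hre_matrix n c 1 = 1\<^sub>m 1"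
  by (rule eq_matI) (auto simp: hre_matrix_def)

lemma harker_matrix_entry:
  assumes i: "i < k" and j: "j < k"
    and nz: "real n - real (missing_row c k i) - 1 \<noteq> 0"
  shows "harker_matrix c k $$ (i, j) = (if i = j then real n else 0)
           - (real n - real (missing_row c k i) - 1) * hre_matrix n c k $$ (i, j)"
proof -
  define e where "e = real n - real (missing_row c k i) - 1"
  have "harker_matrix c k $$ (i, j) = (if i = j then real n else 0) - e * hre_matrix n c k $$ (i, j)"
  proof (cases "i = j")
    case True
    then show ?thesis
      using i by (simp add: harker_matrix_def hre_matrix_def e_def algebra_simps)
  next
    case False
    have "e \<noteq> 0" using nz by (simp add: e_def)
    moreover have "hre_matrix n c k $$ (i, j) = - known_or_zero c i j / e"
      using i j False by (simp add: hre_matrix_def e_def)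
    moreover have "harker_matrix c k $$ (i, j) = known_or_zero c i j"
      using i j False by (simp add: harker_matrix_def)
    ultimately show ?thesis using False by (simp add: field_simps)
  qed
  then show ?thesis by (simp only: e_def)
qed

lemma harker_mult_eq_if_hre_mult_zero:
  assumes diag: "\<forall>i<k. c i i \<noteq> None" and kn: "k < n"
    and v: "v \<in> carrier_vec k" and Av: "hre_matrix n c k *\<^sub>v v = 0\<^sub>v k"
  shows "harker_matrix c k *\<^sub>v v = real n \<cdot>\<^sub>v v"
proof (rule eq_vecI)
  fix i assume "i < dim_vec (real n \<cdot>\<^sub>v v)"
  then have i: "i < k" using v by simp
  define e where "e = real n - real (missing_row c k i) - 1"
  have "missing_row c k i \<le> k - 1" using missing_row_le diag i by blast
  then have e: "e \<noteq> 0" using i kn unfolding e_def by linarith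
  have entry: "harker_matrix c k $$ (i, j) * v $ j
      = (if i = j then real n * v $ j else 0) - e * (hre_matrix n c k $$ (i, j) * v $ j)"
    if "j < k" for j
  proof -
    have "harker_matrix c k $$ (i, j) = (if i = j then real n else 0) - e * hre_matrix n c k $$ (i, j)"
      using harker_matrix_entry[OF i that e[unfolded e_def]] by (simp only: e_def)
    then show ?thesis
      by (simp only: left_diff_distrib mult.assoc if_distrib[of "\<lambda>x. x * v $ j"] mult_zero_left)
  qed
  have row: "(M *\<^sub>v v) $ i = (\<Sum>j<k. M $$ (i, j) * v $ j)" if "M \<in> carrier_mat k k" for M
    using that i v by (simp add: mult_mat_vec_def scalar_prod_def lessThan_atLeast0)
  have "(harker_matrix c k *\<^sub>v v) $ i = (\<Sum>j<k. harker_matrix c k $$ (i, j) * v $ j)"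
    by (rule row[OF harker_matrix_carrier])
  also have "\<dots> = (\<Sum>j<k. (if i = j then real n * v $ j else 0)
                          - e * (hre_matrix n c k $$ (i, j) * v $ j))"
    by (rule sum.cong) (simp_all add: entry)
  also have "\<dots> = real n * v $ i - e * (hre_matrix n c k *\<^sub>v v) $ i"
    using i by (simp add: sum_subtractf sum_distrib_left row[OF hre_matrix_carrier])
  also have "\<dots> = (real n \<cdot>\<^sub>v v) $ i" using Av i v by simp
  finally show "(harker_matrix c k *\<^sub>v v) $ i = (real n \<cdot>\<^sub>v v) $ i" .
qed (use v in \<open>simp add: harker_matrix_def\<close>)

lemma det_hre_matrix_nonzero:
  assumes diag: "\<forall>i<k. c i i \<noteq> None" and kn: "k < n"
    and rho: "spectral_radius (map_mat complex_of_real (harker_matrix c k)) < real n"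
  shows "det (hre_matrix n c k) \<noteq> 0"
proof
  assume "det (hre_matrix n c k) = 0"
  then obtain v where v: "v \<in> carrier_vec k" "v \<noteq> 0\<^sub>v k" "hre_matrix n c k *\<^sub>v v = 0\<^sub>v k"
    using det_0_iff_vec_prod_zero_field[OF hre_matrix_carrier] by blast
  have "dim_row (harker_matrix c k) = k" by (simp add: harker_matrix_def)
  then have "eigenvalue (harker_matrix c k) (real n)"
    using v harker_mult_eq_if_hre_mult_zero[OF diag kn v(1,3)]
    unfolding eigenvalue_def eigenvector_def by auto
  then have "real n \<le> spectral_radius (map_mat complex_of_real (harker_matrix c k))"
    using eigenvalue_le_spectral_radius_of_real[OF harker_matrix_carrier] by fastforce
  with rho show False by simp
qed

lemma spectral_radius_harker_less:
  assumes k: "1 < k"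
    and CI: "harker_CI c k <
      (real n - real k - real (Max ((missing_row c k) ` {..<k}))
         + real (Min ((missing_row c k) ` {..<k}))) / (real k - 1)"
  shows "spectral_radius (map_mat complex_of_real (harker_matrix c k)) < real n"
proof -
  have "Min ((missing_row c k) ` {..<k}) \<le> missing_row c k 0"
    using k by (intro Min_le) auto
  also have "\<dots> \<le> Max ((missing_row c k) ` {..<k})"
    using k by (intro Max_ge) auto
  finally have min_max: "Min ((missing_row c k) ` {..<k}) \<le> Max ((missing_row c k) ` {..<k})" .
  have "real k - 1 > 0" using k by simp
  then have "spectral_radius (map_mat complex_of_real (harker_matrix c k)) - real k
      < real n - real k - real (Max ((missing_row c k) ` {..<k}))
         + real (Min ((missing_row c k) ` {..<k}))"
    using CI unfolding harker_CI_def by (simp add: divide_less_cancel)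
  then show ?thesis using min_max by linarith
qed

theorem mainTheorem6:
  fixes n k :: nat and c :: "nat \<Rightarrow> nat \<Rightarrow> real option"
  assumes pcm: "incomplete_pcm n c"
    and k1: "1 \<le> k" and kn: "k < n"
    and cond: "k = 1 \<or>
      (1 < k \<and> harker_CI c k <
         (real n - real k - real (Max ((missing_row c k) ` {..<k}))
            + real (Min ((missing_row c k) ` {..<k}))) / (real k - 1))"
  shows "invertible_mat (hre_matrix n c k) \<and>
         (\<forall>b \<in> carrier_vec k. \<exists>!w. w \<in> carrier_vec k \<and> hre_matrix n c k *\<^sub>v w = b)"
proof -
  have det: "det (hre_matrix n c k) \<noteq> 0"
    using cond
  proof
    assume "k = 1"
    then have "hre_matrix n c k = 1\<^sub>m 1" by (simp only: hre_matrix_one)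
    then show ?thesis by simp
  next
    assume "1 < k \<and> harker_CI c k <
      (real n - real k - real (Max ((missing_row c k) ` {..<k}))
         + real (Min ((missing_row c k) ` {..<k}))) / (real k - 1)"
    then have "spectral_radius (map_mat complex_of_real (harker_matrix c k)) < real n"
      using spectral_radius_harker_less by blast
    moreover have "\<forall>i<k. c i i \<noteq> None"
      using pcm kn unfolding incomplete_pcm_def by simp
    ultimately show ?thesis using det_hre_matrix_nonzero kn by blast
  qed
  show ?thesis
    using invertible_mat_if_det_nonzero[OF hre_matrix_carrier det]
      ex1_mult_mat_vec_eq_if_det_nonzero[OF hre_matrix_carrier det]
    by blast
qed

end
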